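(* Let $M\subseteq[r]^d$ be a dot array satisfying (P1) and (P3), and suppose $M$ contains a sparse permutation array $P$ of rank $r$ and dimension $d$. Then $M=\overline P$.
   Context: Let $[r]=\{0,\dots,r\}$. $[r]^d$ is partially ordered coordinatewise, with meet $\mathbf x\wedge\mathbf y=(\min(x_i,y_i))_i$. A dot array is a subset of $[r]^d$. Let $\mathrm{rk}_iP$ be one less than the number of distinct values of the $i$-th coordinate among elements of $P$. $P$ is rankable of rank $s$ if all $\mathrm{rk}_iP=s$. $P$ is totally rankable if every principal subarray $P[\mathbf x]=\{\mathbf y\in P:\mathbf y\succeq\mathbf x\}$ is rankable. A point $\mathbf x\in[r]^d$ is redundant for $P$ if $\mathbf x=\bigwedge\mathcal H$ for some $\mathcal H\subseteq P$ with $|\mathcal H|\ge2$ such that every member of $\mathcal H$ shares at least one coordinate with $\mathbf x$. $R(P)$ is the set of redundant points. A permutation array of rank $r$ and dimension $d$ is a totally rankable $P\subseteq[r]^d$ of rank $r$ containing no redundant point. Its redundant closure is $\overline P=P\cup R(P)$. A permutation array is sparse if for every coordinate $i$ and every $c\in[r]$ exactly one element of $P$ has $i$-th coordinate $c$. Properties of a dot array $M$: (P1) $M$ is closed under the meet $\wedge$. (P3) every set $S$ of $r+2$ elements of $M$ contains a subset $S'$ (with at least two elements) such that for every $1\le i\le d$ the value $\min\{x_i:\mathbf x\in S'\}$ is attained by at least two elements of $S'$. *)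

theory Defs
  imports Main
begin

text \<open>Points of [r]^d are represented as functions nat => nat whose coordinates
  0..d-1 lie in {0..r} and which vanish outside {0..<d} (coordinates are
  indexed 0..d-1 instead of 1..d).\<close>

type_synonym point = "nat \<Rightarrow> nat"

definition grid :: "nat \<Rightarrow> nat \<Rightarrow> point set" where
  "grid r d = {x. (\<forall>i<d. x i \<le> r) \<and> (\<forall>i\<ge>d. x i = 0)}"

definition meet :: "point \<Rightarrow> point \<Rightarrow> point" where
  "meet x y = (\<lambda>i. min (x i) (y i))"

definition Meet :: "point set \<Rightarrow> point" where
  "Meet H = (\<lambda>i. Min ((\<lambda>h. h i) ` H))"

definition pleq :: "point \<Rightarrow> point \<Rightarrow> bool" where
  "pleq x y \<longleftrightarrow> (\<forall>i. x i \<le> y i)"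

text \<open>rk_i P = (number of distinct i-th coordinates) - 1, as an integer
  (so the empty array has rank -1 in every coordinate).\<close>
definition rk :: "nat \<Rightarrow> point set \<Rightarrow> int" where
  "rk i P = int (card ((\<lambda>x. x i) ` P)) - 1"

definition rankable_of_rank :: "nat \<Rightarrow> point set \<Rightarrow> int \<Rightarrow> bool" where
  "rankable_of_rank d P s \<longleftrightarrow> (\<forall>i<d. rk i P = s)"

definition rankable :: "nat \<Rightarrow> point set \<Rightarrow> bool" where
  "rankable d P \<longleftrightarrow> (\<exists>s. rankable_of_rank d P s)"

definition principal :: "point set \<Rightarrow> point \<Rightarrow> point set" where
  "principal P x = {y \<in> P. pleq x y}"

definition totally_rankable :: "nat \<Rightarrow> nat \<Rightarrow> point set \<Rightarrow> bool" where
  "totally_rankable r d P \<longleftrightarrow> (\<forall>x\<in>grid r d. rankable d (principal P x))"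

definition redundant :: "nat \<Rightarrow> nat \<Rightarrow> point set \<Rightarrow> point \<Rightarrow> bool" where
  "redundant r d P x \<longleftrightarrow> x \<in> grid r d \<and>
     (\<exists>H. H \<subseteq> P \<and> finite H \<and> card H \<ge> 2 \<and>
          (\<forall>h\<in>H. \<exists>i<d. h i = x i) \<and> x = Meet H)"

definition redundant_set :: "nat \<Rightarrow> nat \<Rightarrow> point set \<Rightarrow> point set" where
  "redundant_set r d P = {x. redundant r d P x}"

definition permutation_array :: "nat \<Rightarrow> nat \<Rightarrow> point set \<Rightarrow> bool" where
  "permutation_array r d P \<longleftrightarrow> P \<subseteq> grid r d \<and> totally_rankable r d P \<and>
     rankable_of_rank d P (int r) \<and> P \<inter> redundant_set r d P = {}"

definition redundant_closure :: "nat \<Rightarrow> nat \<Rightarrow> point set \<Rightarrow> point set" where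
  "redundant_closure r d P = P \<union> redundant_set r d P"

definition sparse :: "nat \<Rightarrow> nat \<Rightarrow> point set \<Rightarrow> bool" where
  "sparse r d P \<longleftrightarrow> (\<forall>i<d. \<forall>c\<le>r. \<exists>!p. p \<in> P \<and> p i = c)"

definition P1 :: "point set \<Rightarrow> bool" where
  "P1 M \<longleftrightarrow> (\<forall>x\<in>M. \<forall>y\<in>M. meet x y \<in> M)"

definition P3 :: "nat \<Rightarrow> nat \<Rightarrow> point set \<Rightarrow> bool" where
  "P3 r d M \<longleftrightarrow> (\<forall>S. S \<subseteq> M \<and> finite S \<and> card S = r + 2 \<longrightarrow>
     (\<exists>S'. S' \<subseteq> S \<and> card S' \<ge> 2 \<and>
        (\<forall>i<d. card {x \<in> S'. x i = Min ((\<lambda>y. y i) ` S')} \<ge> 2)))"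

end

theory Submission
  imports Defs
begin

text \<open>Only the sparseness of \<open>P\<close> matters: it makes every coordinate injective on \<open>P\<close>,
  so \<open>P\<close> has \<open>r + 1\<close> points. For \<open>m \<in> M - P\<close>, property (P3) applied to the \<open>r + 2\<close>
  points \<open>P \<union> {m}\<close> yields a subset \<open>S'\<close> in which every coordinate minimum is attained
  twice. Two points of \<open>P\<close> never share a coordinate, so each doubly attained minimum
  involves \<open>m\<close> and a point of \<open>P\<close>; hence \<open>m\<close> is the meet of the points of \<open>S' - {m}\<close>
  sharing a coordinate with it, i.e. \<open>m\<close> is redundant. Conversely every redundant
  point is a meet of points of \<open>P \<subseteq> M\<close> and lies in \<open>M\<close> by (P1).\<close>

lemma Meet_singleton [simp]: "Meet {x} = x"
  by (simp add: Meet_def)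

lemma Meet_insert:
  assumes "finite H" "H \<noteq> {}"
  shows "Meet (insert x H) = meet x (Meet H)"
  using assms by (auto simp: Meet_def meet_def)

lemma Meet_mem_if_P1:
  assumes "P1 M" "finite H" "H \<noteq> {}" "H \<subseteq> M"
  shows "Meet H \<in> M"
  using assms(2-4)
proof (induction H rule: finite_ne_induct)
  case (singleton x)
  then show ?case by simp
next
  case (insert x H)
  then show ?case
    using assms(1) by (simp add: Meet_insert P1_def)
qed

lemma redundant_closure_subset_if_P1:
  assumes "P1 M" "P \<subseteq> M"
  shows "redundant_closure r d P \<subseteq> M"
proof
  fix x assume "x \<in> redundant_closure r d P"
  then consider "x \<in> P" | H where "H \<subseteq> P" "finite H" "card H \<ge> 2" "x = Meet H"
    by (auto simp: redundant_closure_def redundant_set_def redundant_def)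
  then show "x \<in> M"
  proof cases
    case 2
    then have "H \<noteq> {}" by auto
    with 2 show ?thesis
      using Meet_mem_if_P1[OF assms(1)] assms(2) by blast
  qed (use assms(2) in blast)
qed

lemma grid_eqI:
  assumes "x \<in> grid r d" "y \<in> grid r d" "\<And>i. i < d \<Longrightarrow> x i = y i"
  shows "x = y"
proof
  fix i show "x i = y i"
    using assms by (cases "i < d") (auto simp: grid_def)
qed

lemma P1_grid: "P1 (grid r d)"
  by (auto simp: P1_def grid_def meet_def min.coboundedI1)

lemma sparse_coord_inj_on:
  assumes "sparse r d P" "P \<subseteq> grid r d" "i < d"
  shows "inj_on (\<lambda>p. p i) P"
proof
  fix a b assume ab: "a \<in> P" "b \<in> P" "a i = b i"
  then have "a i \<le> r" using assms(2,3) by (auto simp: grid_def)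
  then show "a = b"
    using assms(1,3) ab unfolding sparse_def by metis
qed

lemma sparse_bij_betw_coord:
  assumes "sparse r d P" "P \<subseteq> grid r d" "i < d"
  shows "bij_betw (\<lambda>p. p i) P {0..r}"
proof (rule bij_betw_imageI)
  show "inj_on (\<lambda>p. p i) P" using sparse_coord_inj_on[OF assms] .
  have "(\<lambda>p. p i) ` P \<subseteq> {0..r}" using assms(2,3) by (auto simp: grid_def)
  moreover have "{0..r} \<subseteq> (\<lambda>p. p i) ` P"
  proof
    fix c assume "c \<in> {0..r}"
    then have "c \<le> r" by simp
    then obtain p where "p \<in> P" "p i = c"
      using assms(1,3) unfolding sparse_def by blast
    then show "c \<in> (\<lambda>p. p i) ` P" by force
  qed
  ultimately show "(\<lambda>p. p i) ` P = {0..r}" by blast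
qed

lemma sparse_finite_card:
  assumes "sparse r d P" "P \<subseteq> grid r d" "d \<ge> 1"
  shows "finite P" "card P = r + 1"
proof -
  have bij: "bij_betw (\<lambda>p. p 0) P {0..r}"
    using sparse_bij_betw_coord[OF assms(1,2)] assms(3) by simp
  show "finite P" using bij_betw_finite[OF bij] by simp
  show "card P = r + 1" using bij_betw_same_card[OF bij] by simp
qed

lemma Meet_eq_if_attained_lower_bound:
  assumes "finite H" "H \<subseteq> grid r d" "m \<in> grid r d" "d \<ge> 1"
    and lower: "\<And>i h. i < d \<Longrightarrow> h \<in> H \<Longrightarrow> m i \<le> h i"
    and attained: "\<And>i. i < d \<Longrightarrow> \<exists>h\<in>H. h i = m i"
  shows "Meet H = m"
proof -
  have "H \<noteq> {}" using attained[of 0] assms(4) by auto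
  have "Meet H \<in> grid r d"
    using Meet_mem_if_P1[OF P1_grid assms(1) \<open>H \<noteq> {}\<close> assms(2)] .
  moreover have "Meet H i = m i" if "i < d" for i
    unfolding Meet_def using assms(1) lower[OF that] attained[OF that]
    by (intro Min_eqI) (auto intro: rev_image_eqI)
  ultimately show ?thesis using grid_eqI assms(3) by blast
qed

lemma redundantI_attained_lower_bound:
  assumes "P \<subseteq> grid r d" "m \<in> grid r d" "m \<notin> P" "d \<ge> 1"
    and "H \<subseteq> P" "finite H"
    and lower: "\<And>i h. i < d \<Longrightarrow> h \<in> H \<Longrightarrow> m i \<le> h i"
    and attained: "\<And>i. i < d \<Longrightarrow> \<exists>h\<in>H. h i = m i"
    and shares: "\<And>h. h \<in> H \<Longrightarrow> \<exists>i<d. h i = m i"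
  shows "redundant r d P m"
proof -
  have H_grid: "H \<subseteq> grid r d" using assms(1,5) by blast
  have Meet_H: "Meet H = m"
    by (rule Meet_eq_if_attained_lower_bound[OF assms(6) H_grid assms(2,4)])
      (use lower attained in auto)
  have "H \<noteq> {}" using attained[of 0] assms(4) by auto
  then have "card H > 0" using assms(6) by (simp add: card_gt_0_iff)
  moreover have "card H \<noteq> 1"
    using Meet_H assms(3,5) by (auto simp: card_1_singleton_iff)
  ultimately have "card H \<ge> 2" by linarith
  then show ?thesis
    unfolding redundant_def using assms(2,5,6) shares Meet_H by blast
qed

lemma double_min_attained_by_new_point:
  assumes "inj_on (\<lambda>p. p i) P" "S' \<subseteq> insert m P" "finite S'"
    and double: "card {x \<in> S'. x i = Min ((\<lambda>y. y i) ` S')} \<ge> 2"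
  shows "m \<in> S'" "m i = Min ((\<lambda>y. y i) ` S')" "\<exists>p\<in>S' - {m}. p i = m i"
proof -
  let ?A = "{x \<in> S'. x i = Min ((\<lambda>y. y i) ` S')}"
  have "\<not> card ?A \<le> Suc 0" using double by linarith
  then obtain a b where ab: "a \<in> ?A" "b \<in> ?A" "a \<noteq> b"
    using card_le_Suc0_iff_eq[of ?A] assms(3) by auto
  then have "a i = b i" by simp
  then have "\<not> (a \<in> P \<and> b \<in> P)"
    using ab(3) assms(1) by (auto dest: inj_onD)
  then have "a = m \<or> b = m"
    using ab assms(2) by blast
  with ab show "m \<in> S'" "m i = Min ((\<lambda>y. y i) ` S')" "\<exists>p\<in>S' - {m}. p i = m i"
    by auto
qed

lemma redundant_if_P3_sparse:
  assumes "P3 r d M" "P \<subseteq> M" "M \<subseteq> grid r d" "sparse r d P" "d \<ge> 1"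
    and "m \<in> M" "m \<notin> P"
  shows "redundant r d P m"
proof -
  have P_grid: "P \<subseteq> grid r d" using assms(2,3) by blast
  have "finite P" "card P = r + 1"
    using sparse_finite_card[OF assms(4) P_grid assms(5)] by auto
  then have "insert m P \<subseteq> M" "finite (insert m P)" "card (insert m P) = r + 2"
    using assms(2,6,7) by auto
  then obtain S' where S': "S' \<subseteq> insert m P"
    "\<forall>i<d. card {x \<in> S'. x i = Min ((\<lambda>y. y i) ` S')} \<ge> 2"
    using assms(1)[unfolded P3_def, rule_format, of "insert m P"] by blast
  have "finite S'" using S'(1) \<open>finite (insert m P)\<close> finite_subset by blast
  note min_facts = double_min_attained_by_new_point[OF
      sparse_coord_inj_on[OF assms(4) P_grid] S'(1) \<open>finite S'\<close> S'(2)[rule_format]]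
  define H where "H = {h \<in> S' - {m}. \<exists>i<d. h i = m i}"
  show ?thesis
  proof (rule redundantI_attained_lower_bound[OF P_grid _ assms(7,5), of H])
    show "m \<in> grid r d" using assms(3,6) by blast
    show "H \<subseteq> P" "finite H" using S'(1) \<open>finite S'\<close> by (auto simp: H_def)
    show "m i \<le> h i" if "i < d" "h \<in> H" for i h
      using min_facts(2)[OF that(1)] that \<open>finite S'\<close> by (auto simp: H_def)
    show "\<exists>h\<in>H. h i = m i" if "i < d" for i
      using min_facts(3)[OF that] that by (auto simp: H_def)
  qed (auto simp: H_def)
qed

theorem mainTheorem2:
  fixes r d :: nat and M P :: "point set"
  assumes "d \<ge> 1"
    and "M \<subseteq> grid r d"
    and "P1 M"
    and "P3 r d M"
    and "P \<subseteq> M"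
    and "permutation_array r d P"
    and "sparse r d P"
  shows "M = redundant_closure r d P"
proof
  show "M \<subseteq> redundant_closure r d P"
    using redundant_if_P3_sparse[OF assms(4,5,2,7,1)]
    by (auto simp: redundant_closure_def redundant_set_def)
  show "redundant_closure r d P \<subseteq> M"
    using redundant_closure_subset_if_P1[OF assms(3,5)] .
qed

end
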